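(* Let $H_\omega = -\Delta + V_\omega$ be the Anderson Hamiltonian on $\ell^2(\mathbb{Z}^d)$ and let $I$ be an interval of exponential localization for $H_\omega$. Then, with probability one, every eigenvalue of $H_\omega$ in $I$ is simple.
   Context: The Anderson Hamiltonian is the random operator $H_\omega = -\Delta + V_\omega$ on $\ell^2(\mathbb{Z}^d)$, where $\Delta(x,y)=1$ if $|x-y|=1$ and $\Delta(x,y)=0$ otherwise, and the random potential $V_\omega = \{V_\omega(x), x\in\mathbb{Z}^d\}$ (acting by multiplication) consists of independent identically distributed random variables whose common probability distribution $\mu$ has a bounded density $\rho$. An interval $I$ is an interval of exponential localization for $H_\omega$ if, with probability one, $H_\omega$ has pure point spectrum in $I$ and every eigenfunction of $H_\omega$ with eigenvalue in $I$ decays exponentially (i.e. $|\varphi(x)|\le C_\varphi e^{-m|x|}$ for some $C_\varphi<\infty$, $m>0$). *)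

theory Defs
  imports "HOL-Probability.Probability"
begin

text \<open>Lattice sites of Z^d: functions from a finite index type 'd (with CARD('d) = d) to int.\<close>
type_synonym 'd site = "'d \<Rightarrow> int"

definition site_norm :: "('d::finite) site \<Rightarrow> real" where
  "site_norm x = (\<Sum>i\<in>UNIV. real_of_int \<bar>x i\<bar>)"

definition adjacent :: "('d::finite) site \<Rightarrow> 'd site \<Rightarrow> bool" where
  "adjacent x y \<longleftrightarrow> site_norm (\<lambda>i. x i - y i) = 1"

definition in_l2 :: "('d site \<Rightarrow> complex) \<Rightarrow> bool" where
  "in_l2 \<phi> \<longleftrightarrow> (\<lambda>x. (cmod (\<phi> x))^2) summable_on UNIV"

definition l2_inner :: "('d site \<Rightarrow> complex) \<Rightarrow> ('d site \<Rightarrow> complex) \<Rightarrow> complex" where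
  "l2_inner \<phi> \<psi> = infsum (\<lambda>x. cnj (\<phi> x) * \<psi> x) UNIV"

text \<open>The Anderson Hamiltonian H = -Delta + V acting on functions on Z^d.
  As an operator on l^2 it is taken with its maximal (= self-adjoint) domain
  {phi in l^2. H phi in l^2}.\<close>
definition anderson_op :: "('d::finite site \<Rightarrow> real) \<Rightarrow> ('d site \<Rightarrow> complex) \<Rightarrow> ('d site \<Rightarrow> complex)" where
  "anderson_op V \<phi> = (\<lambda>x. - (\<Sum>y\<in>{y. adjacent x y}. \<phi> y) + complex_of_real (V x) * \<phi> x)"

definition is_eigenfunction :: "('d::finite site \<Rightarrow> real) \<Rightarrow> real \<Rightarrow> ('d site \<Rightarrow> complex) \<Rightarrow> bool" where
  "is_eigenfunction V E \<phi> \<longleftrightarrow>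
     in_l2 \<phi> \<and> \<phi> \<noteq> (\<lambda>_. 0) \<and> anderson_op V \<phi> = (\<lambda>x. complex_of_real E * \<phi> x)"

definition eigenvalue :: "('d::finite site \<Rightarrow> real) \<Rightarrow> real \<Rightarrow> bool" where
  "eigenvalue V E \<longleftrightarrow> (\<exists>\<phi>. is_eigenfunction V E \<phi>)"

definition simple_eigenvalue :: "('d::finite site \<Rightarrow> real) \<Rightarrow> real \<Rightarrow> bool" where
  "simple_eigenvalue V E \<longleftrightarrow> eigenvalue V E \<and>
     (\<forall>\<phi> \<psi>. is_eigenfunction V E \<phi> \<longrightarrow> is_eigenfunction V E \<psi> \<longrightarrow>
        (\<exists>c::complex. \<psi> = (\<lambda>x. c * \<phi> x)))"

definition resolvent :: "('d::finite site \<Rightarrow> real) \<Rightarrow> complex \<Rightarrow> ('d site \<Rightarrow> complex) \<Rightarrow> ('d site \<Rightarrow> complex)" where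
  "resolvent V z \<phi> = (THE \<psi>. in_l2 \<psi> \<and> (\<forall>x. anderson_op V \<psi> x - z * \<psi> x = \<phi> x))"

definition spectral_measure :: "('d::finite site \<Rightarrow> real) \<Rightarrow> ('d site \<Rightarrow> complex) \<Rightarrow> real measure \<Rightarrow> bool" where
  "spectral_measure V \<phi> \<mu> \<longleftrightarrow> sets \<mu> = sets borel \<and> finite_measure \<mu> \<and>
     (\<forall>z. Im z \<noteq> 0 \<longrightarrow>
        integrable \<mu> (\<lambda>t. 1 / (complex_of_real t - z)) \<and>
        (\<integral>t. 1 / (complex_of_real t - z) \<partial>\<mu>) = l2_inner \<phi> (resolvent V z \<phi>))"

text \<open>H has pure point spectrum in I: every spectral measure, restricted to I, is pure point.\<close>
definition pure_point_spectrum_in :: "('d::finite site \<Rightarrow> real) \<Rightarrow> real set \<Rightarrow> bool" where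
  "pure_point_spectrum_in V I \<longleftrightarrow>
     (\<forall>\<phi> \<mu>. in_l2 \<phi> \<longrightarrow> spectral_measure V \<phi> \<mu> \<longrightarrow>
        (\<exists>S. countable S \<and> emeasure \<mu> (I - S) = 0))"

definition exp_decaying :: "('d::finite site \<Rightarrow> complex) \<Rightarrow> bool" where
  "exp_decaying \<phi> \<longleftrightarrow> (\<exists>C m. m > (0::real) \<and>
      (\<forall>x. cmod (\<phi> x) \<le> C * exp (- m * site_norm x)))"

definition anderson_model :: "'a measure \<Rightarrow> ('a \<Rightarrow> ('d::finite) site \<Rightarrow> real) \<Rightarrow> (real \<Rightarrow> real) \<Rightarrow> bool" where
  "anderson_model M V \<rho> \<longleftrightarrow> prob_space M \<and>
     (\<forall>t. 0 \<le> \<rho> t) \<and> (\<exists>B. \<forall>t. \<rho> t \<le> B) \<and>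
     (\<forall>x. distributed M lborel (\<lambda>\<omega>. V \<omega> x) (\<lambda>t. ennreal (\<rho> t))) \<and>
     prob_space.indep_vars M (\<lambda>_. borel) (\<lambda>x \<omega>. V \<omega> x) UNIV"

definition exp_localization_interval :: "'a measure \<Rightarrow> ('a \<Rightarrow> ('d::finite) site \<Rightarrow> real) \<Rightarrow> real set \<Rightarrow> bool" where
  "exp_localization_interval M V I \<longleftrightarrow> is_interval I \<and>
     (AE \<omega> in M. pure_point_spectrum_in (V \<omega>) I \<and>
        (\<forall>E\<in>I. \<forall>\<phi>. is_eigenfunction (V \<omega>) E \<phi> \<longrightarrow> exp_decaying \<phi>))"

end

theory Submission
  imports Defs
begin

text \<open>If no site \<open>x\<close> splits an eigenspace, i.e. no eigenspace contains both an eigenfunction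
  vanishing at \<open>x\<close> and one that does not, every eigenvalue is simple, since a suitable combination
  of two eigenfunctions vanishes at any given site. Fix the potential away from \<open>x\<close> and vary the
  coupling \<open>v\<close> at \<open>x\<close>. An eigenfunction vanishing at \<open>x\<close> does not feel \<open>v\<close>, so the energy of a
  split eigenspace is an eigenvalue of one fixed operator; Green's identity for eigenfunctions of two
  potentials that differ only at \<open>x\<close> shows that this energy determines \<open>v\<close>. Eigenvalues are
  countable (Bessel's inequality at each site for orthonormal eigenfunctions), hence so are the bad
  couplings, and by independence and absolute continuity of the single-site distribution the
  coupling avoids them almost surely.\<close>

definition unit_steps :: "('d::finite) site set" where
  "unit_steps = {u. site_norm u = 1}"

definition translate :: "'d site \<Rightarrow> 'd site \<Rightarrow> 'd site" where
  "translate z u = (\<lambda>i. z i + u i)"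

lemma finite_unit_steps: "finite (unit_steps :: ('d::finite) site set)"
proof (rule finite_subset)
  show "unit_steps \<subseteq> Pi\<^sub>E (UNIV::'d set) (\<lambda>_. {-1..1::int})"
  proof
    fix u :: "'d site"
    assume "u \<in> unit_steps"
    then have norm: "site_norm u = 1" by (simp add: unit_steps_def)
    have "\<bar>u i\<bar> \<le> 1" for i
    proof -
      have "real_of_int \<bar>u i\<bar> \<le> (\<Sum>j\<in>UNIV. real_of_int \<bar>u j\<bar>)"
        by (rule member_le_sum) auto
      then show ?thesis using norm by (simp add: site_norm_def)
    qed
    then show "u \<in> Pi\<^sub>E UNIV (\<lambda>_. {-1..1::int})" by (auto simp: abs_le_iff)
  qed
qed (rule finite_PiE; simp)

lemma site_norm_uminus: "site_norm (\<lambda>i. - u i) = site_norm u"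
  by (simp add: site_norm_def)

lemma adjacent_eq_translate_unit_steps: "{y. adjacent z y} = translate z ` unit_steps"
proof (intro set_eqI iffI)
  fix y
  assume "y \<in> {y. adjacent z y}"
  then have "site_norm (\<lambda>i. y i - z i) = 1"
    using site_norm_uminus[of "\<lambda>i. z i - y i"] by (simp add: adjacent_def)
  moreover have "y = translate z (\<lambda>i. y i - z i)" by (simp add: translate_def)
  ultimately show "y \<in> translate z ` unit_steps" by (auto simp: unit_steps_def)
next
  fix y
  assume "y \<in> translate z ` unit_steps"
  then obtain u where u: "site_norm u = 1" "y = translate z u" by (auto simp: unit_steps_def)
  then have "(\<lambda>i. z i - y i) = (\<lambda>i. - u i)" by (auto simp: translate_def)
  then show "y \<in> {y. adjacent z y}" using u(1) site_norm_uminus[of u] by (simp add: adjacent_def)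
qed

lemma inj_translate: "inj (translate z)"
  by (auto simp: inj_def translate_def fun_eq_iff)

lemma bij_translate: "bij (\<lambda>z. translate z u)"
  by (rule bij_betwI[where g = "\<lambda>z. translate z (\<lambda>i. - u i)"]) (auto simp: translate_def)

lemma bij_betw_uminus_unit_steps: "bij_betw (\<lambda>u i. - u i) unit_steps unit_steps"
  by (rule bij_betwI[where g = "\<lambda>u i. - u i"]) (auto simp: unit_steps_def site_norm_uminus)

definition neighbour_sum :: "(('d::finite) site \<Rightarrow> complex) \<Rightarrow> 'd site \<Rightarrow> complex" where
  "neighbour_sum f z = (\<Sum>y\<in>{y. adjacent z y}. f y)"

lemma anderson_op_eq: "anderson_op V f z = - neighbour_sum f z + complex_of_real (V z) * f z"
  by (simp add: anderson_op_def neighbour_sum_def)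

lemma neighbour_sum_eq_sum_unit_steps: "neighbour_sum f z = (\<Sum>u\<in>unit_steps. f (translate z u))"
  unfolding neighbour_sum_def adjacent_eq_translate_unit_steps
  by (subst sum.reindex) (auto intro: inj_on_subset[OF inj_translate])

lemma in_l2_translate: "in_l2 f \<Longrightarrow> in_l2 (\<lambda>z. f (translate z u))"
  unfolding in_l2_def
  using summable_on_reindex_bij_betw[OF bij_translate[of u], of "\<lambda>z. (cmod (f z))\<^sup>2"] by simp

lemma in_l2_cmult: "in_l2 f \<Longrightarrow> in_l2 (\<lambda>z. c * f z)"
  unfolding in_l2_def by (simp add: norm_mult power_mult_distrib summable_on_cmult_right)

lemma in_l2_diff:
  assumes "in_l2 f" "in_l2 g"
  shows "in_l2 (\<lambda>z. f z - g z)"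
  unfolding in_l2_def
proof (rule summable_on_comparison_test)
  show "(\<lambda>z. 2 * (cmod (f z))\<^sup>2 + 2 * (cmod (g z))\<^sup>2) summable_on UNIV"
    using assms unfolding in_l2_def by (intro summable_on_add summable_on_cmult_right)
  fix z
  have "(cmod (f z - g z))\<^sup>2 \<le> (cmod (f z) + cmod (g z))\<^sup>2"
    by (intro power_mono norm_triangle_ineq4) auto
  also have "\<dots> \<le> 2 * (cmod (f z))\<^sup>2 + 2 * (cmod (g z))\<^sup>2"
    by (smt (verit) sum_squares_bound power2_sum)
  finally show "(cmod (f z - g z))\<^sup>2 \<le> 2 * (cmod (f z))\<^sup>2 + 2 * (cmod (g z))\<^sup>2" .
qed simp

lemma summable_on_cnj_mult:
  assumes "in_l2 f" "in_l2 g"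
  shows "(\<lambda>z. cnj (f z) * g z) summable_on UNIV"
proof -
  have "(\<lambda>z. norm (cnj (f z) * g z)) summable_on UNIV"
  proof (rule summable_on_comparison_test)
    show "(\<lambda>z. (cmod (f z))\<^sup>2 + (cmod (g z))\<^sup>2) summable_on UNIV"
      using assms unfolding in_l2_def by (rule summable_on_add)
    fix z
    have "cmod (f z) * cmod (g z) \<le> (cmod (f z))\<^sup>2 + (cmod (g z))\<^sup>2"
      by (smt (verit) norm_ge_zero power2_eq_square mult_mono mult_nonneg_nonneg)
    then show "norm (cnj (f z) * g z) \<le> (cmod (f z))\<^sup>2 + (cmod (g z))\<^sup>2"
      by (simp add: norm_mult)
  qed simp
  then show ?thesis by (simp add: summable_on_iff_abs_summable_on_complex)
qed

lemma cnj_mult_self: "cnj z * z = complex_of_real ((cmod z)\<^sup>2)"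
  by (metis complex_norm_square mult.commute)

lemma l2_inner_self:
  assumes "in_l2 f"
  shows "l2_inner f f = complex_of_real (infsum (\<lambda>z. (cmod (f z))\<^sup>2) UNIV)"
proof -
  have "((\<lambda>z. complex_of_real ((cmod (f z))\<^sup>2)) has_sum
          complex_of_real (infsum (\<lambda>z. (cmod (f z))\<^sup>2) UNIV)) UNIV"
    using assms unfolding in_l2_def by (intro has_sum_of_real has_sum_infsum)
  then show ?thesis unfolding l2_inner_def cnj_mult_self by (rule infsumI)
qed

definition l2_bounded :: "real \<Rightarrow> ('i \<Rightarrow> complex) set" where
  "l2_bounded r = {f. \<forall>F. finite F \<longrightarrow> (\<Sum>z\<in>F. (cmod (f z))\<^sup>2) \<le> r}"

lemma l2_bounded_mono: "r \<le> s \<Longrightarrow> l2_bounded r \<subseteq> l2_bounded s"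
  by (force simp: l2_bounded_def)

lemma in_l2_iff_l2_bounded: "in_l2 f \<longleftrightarrow> (\<exists>r. f \<in> l2_bounded r)"
proof
  assume "in_l2 f"
  then have "f \<in> l2_bounded (infsum (\<lambda>z. (cmod (f z))\<^sup>2) UNIV)"
    unfolding in_l2_def l2_bounded_def by (auto intro: finite_sum_le_infsum)
  then show "\<exists>r. f \<in> l2_bounded r" ..
next
  assume "\<exists>r. f \<in> l2_bounded r"
  then show "in_l2 f"
    unfolding in_l2_def l2_bounded_def
    by (auto intro!: nonneg_bdd_above_summable_on bdd_aboveI2)
qed

lemma has_sum_sum:
  fixes f :: "'i \<Rightarrow> 'a \<Rightarrow> 'b::topological_comm_monoid_add"
  assumes "finite I" "\<And>i. i \<in> I \<Longrightarrow> (f i has_sum s i) A"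
  shows "((\<lambda>x. \<Sum>i\<in>I. f i x) has_sum (\<Sum>i\<in>I. s i)) A"
  using assms by (induction I rule: finite_induct) (auto intro: has_sum_add)

lemma has_sum_diff:
  fixes f g :: "'a \<Rightarrow> 'b::topological_ab_group_add"
  assumes "(f has_sum a) A" "(g has_sum b) A"
  shows "((\<lambda>x. f x - g x) has_sum (a - b)) A"
proof -
  have "((\<lambda>x. - g x) has_sum (- b)) A" using assms(2) by (simp add: has_sum_uminus)
  from has_sum_add[OF assms(1) this] show ?thesis by simp
qed

section \<open>Green's identity and consequences\<close>

lemma neighbour_sum_symmetric:
  assumes f: "in_l2 f" and g: "in_l2 g"
  obtains S where "((\<lambda>z. cnj (f z) * neighbour_sum g z) has_sum S) UNIV"
    and "((\<lambda>z. cnj (neighbour_sum f z) * g z) has_sum S) UNIV"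
proof
  define S where "S = (\<Sum>u\<in>unit_steps. infsum (\<lambda>z. cnj (f z) * g (translate z u)) UNIV)"
  have "((\<lambda>z. \<Sum>u\<in>unit_steps. cnj (f z) * g (translate z u)) has_sum S) UNIV"
    unfolding S_def
    by (intro has_sum_sum finite_unit_steps has_sum_infsum summable_on_cnj_mult f in_l2_translate g)
  then show "((\<lambda>z. cnj (f z) * neighbour_sum g z) has_sum S) UNIV"
    by (simp add: neighbour_sum_eq_sum_unit_steps sum_distrib_left)
  txt \<open>Substituting \<open>z \<mapsto> z - u\<close> and then \<open>u \<mapsto> -u\<close> moves the shift from \<open>f\<close> to \<open>g\<close>.\<close>
  have shift: "infsum (\<lambda>z. cnj (f (translate z u)) * g z) UNIV =
               infsum (\<lambda>z. cnj (f z) * g (translate z (\<lambda>i. - u i))) UNIV" for u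
    using infsum_reindex_bij_betw[OF bij_translate[of "\<lambda>i. - u i"],
        of "\<lambda>z. cnj (f (translate z u)) * g z"]
    by (simp add: translate_def)
  have "(\<Sum>u\<in>unit_steps. infsum (\<lambda>z. cnj (f (translate z u)) * g z) UNIV) = S"
    unfolding shift S_def
    using sum.reindex_bij_betw[OF bij_betw_uminus_unit_steps,
        of "\<lambda>u. infsum (\<lambda>z. cnj (f z) * g (translate z u)) UNIV"]
    by simp
  moreover have "((\<lambda>z. \<Sum>u\<in>unit_steps. cnj (f (translate z u)) * g z) has_sum
      (\<Sum>u\<in>unit_steps. infsum (\<lambda>z. cnj (f (translate z u)) * g z) UNIV)) UNIV"
    by (intro has_sum_sum finite_unit_steps has_sum_infsum summable_on_cnj_mult g in_l2_translate f)
  ultimately show "((\<lambda>z. cnj (neighbour_sum f z) * g z) has_sum S) UNIV"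
    by (simp add: neighbour_sum_eq_sum_unit_steps sum_distrib_right)
qed

lemma has_sum_potential_difference:
  assumes f: "in_l2 f" and g: "in_l2 g"
    and ef: "anderson_op V1 f = (\<lambda>z. complex_of_real E1 * f z)"
    and eg: "anderson_op V2 g = (\<lambda>z. complex_of_real E2 * g z)"
  shows "((\<lambda>z. complex_of_real (V2 z - V1 z) * (cnj (f z) * g z)) has_sum
           (complex_of_real (E2 - E1) * l2_inner f g)) UNIV"
proof -
  obtain S where S1: "((\<lambda>z. cnj (f z) * neighbour_sum g z) has_sum S) UNIV"
    and S2: "((\<lambda>z. cnj (neighbour_sum f z) * g z) has_sum S) UNIV"
    using neighbour_sum_symmetric[OF f g] .
  have "((\<lambda>z. complex_of_real (E2 - E1) * (cnj (f z) * g z) +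
        (cnj (f z) * neighbour_sum g z - cnj (neighbour_sum f z) * g z)) has_sum
        (complex_of_real (E2 - E1) * l2_inner f g + (S - S))) UNIV"
    unfolding l2_inner_def
    by (intro has_sum_add has_sum_cmult_right has_sum_infsum summable_on_cnj_mult f g
        has_sum_diff S1 S2)
  moreover have "complex_of_real (V2 z - V1 z) * (cnj (f z) * g z) =
        complex_of_real (E2 - E1) * (cnj (f z) * g z) +
        (cnj (f z) * neighbour_sum g z - cnj (neighbour_sum f z) * g z)" for z
  proof -
    have "complex_of_real (V1 z) * f z = complex_of_real E1 * f z + neighbour_sum f z"
      using fun_cong[OF ef, of z] by (simp add: anderson_op_eq algebra_simps)
    then have "cnj (complex_of_real (V1 z) * f z) = cnj (complex_of_real E1 * f z + neighbour_sum f z)"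
      by (rule arg_cong)
    then have pf: "complex_of_real (V1 z) * cnj (f z) =
        complex_of_real E1 * cnj (f z) + cnj (neighbour_sum f z)"
      by simp
    have pg: "complex_of_real (V2 z) * g z = complex_of_real E2 * g z + neighbour_sum g z"
      using fun_cong[OF eg, of z] by (simp add: anderson_op_eq algebra_simps)
    have "complex_of_real (V2 z - V1 z) * (cnj (f z) * g z) =
        cnj (f z) * (complex_of_real (V2 z) * g z) - (complex_of_real (V1 z) * cnj (f z)) * g z"
      by (simp add: algebra_simps)
    also have "\<dots> = complex_of_real (E2 - E1) * (cnj (f z) * g z) +
        (cnj (f z) * neighbour_sum g z - cnj (neighbour_sum f z) * g z)"
      unfolding pf pg by (simp add: algebra_simps)
    finally show ?thesis .
  qed
  ultimately show ?thesis by simp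
qed

lemma eigenfunctions_orthogonal:
  assumes "is_eigenfunction V E1 f" "is_eigenfunction V E2 g" "E1 \<noteq> E2"
  shows "l2_inner f g = 0"
proof -
  have "((\<lambda>z. complex_of_real (V z - V z) * (cnj (f z) * g z)) has_sum
           (complex_of_real (E2 - E1) * l2_inner f g)) UNIV"
    using assms by (intro has_sum_potential_difference) (auto simp: is_eigenfunction_def)
  moreover have "((\<lambda>z. complex_of_real (V z - V z) * (cnj (f z) * g z)) has_sum 0) UNIV"
    by simp
  ultimately have "complex_of_real (E2 - E1) * l2_inner f g = 0"
    using has_sum_unique by blast
  then show ?thesis using assms(3) by simp
qed

lemma eigenfunctions_rank_one_perturbation:
  assumes "is_eigenfunction V1 E f" "is_eigenfunction V2 E g"
    and "\<And>z. z \<noteq> x \<Longrightarrow> V1 z = V2 z"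
  shows "complex_of_real (V2 x - V1 x) * (cnj (f x) * g x) = 0"
proof -
  have "((\<lambda>z. complex_of_real (V2 z - V1 z) * (cnj (f z) * g z)) has_sum
           (complex_of_real (E - E) * l2_inner f g)) UNIV"
    using assms by (intro has_sum_potential_difference) (auto simp: is_eigenfunction_def)
  moreover have "((\<lambda>z. complex_of_real (V2 z - V1 z) * (cnj (f z) * g z)) has_sum
           (complex_of_real (V2 x - V1 x) * (cnj (f x) * g x))) UNIV"
    using assms(3) by (intro has_sum_finite_neutralI[where B = "{x}"]) auto
  ultimately have "complex_of_real (E - E) * l2_inner f g =
      complex_of_real (V2 x - V1 x) * (cnj (f x) * g x)"
    by (rule has_sum_unique)
  then show ?thesis by simp
qed

lemma anderson_op_cmult: "anderson_op V (\<lambda>z. c * f z) = (\<lambda>z. c * anderson_op V f z)"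
  by (auto simp: anderson_op_def fun_eq_iff sum_distrib_left algebra_simps)

lemma anderson_op_diff:
  "anderson_op V (\<lambda>z. f z - g z) = (\<lambda>z. anderson_op V f z - anderson_op V g z)"
  by (auto simp: anderson_op_def fun_eq_iff sum_subtractf algebra_simps)

lemma is_eigenfunction_cmult:
  assumes "is_eigenfunction V E f" "c \<noteq> 0"
  shows "is_eigenfunction V E (\<lambda>z. c * f z)"
  using assms by (auto simp: is_eigenfunction_def in_l2_cmult anderson_op_cmult fun_eq_iff)

lemma normalized_eigenfunction_exists:
  assumes "eigenvalue V E"
  obtains e where "is_eigenfunction V E e" "l2_inner e e = 1"
proof -
  obtain f where f: "is_eigenfunction V E f" using assms by (auto simp: eigenvalue_def)
  define N where "N = infsum (\<lambda>z. (cmod (f z))\<^sup>2) UNIV"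
  have "N > 0"
  proof -
    obtain y where "f y \<noteq> 0" using f by (auto simp: is_eigenfunction_def)
    moreover have "(cmod (f y))\<^sup>2 \<le> N"
      using f finite_sum_le_infsum[of "\<lambda>z. (cmod (f z))\<^sup>2" UNIV "{y}"]
      by (simp add: N_def is_eigenfunction_def in_l2_def)
    ultimately show ?thesis
      by (meson less_le_trans zero_less_norm_iff zero_less_power)
  qed
  define c where "c = complex_of_real (1 / sqrt N)"
  have "l2_inner (\<lambda>z. c * f z) (\<lambda>z. c * f z) = (cnj c * c) * l2_inner f f"
    unfolding l2_inner_def by (simp add: algebra_simps infsum_cmult_right')
  also have "cnj c * c = complex_of_real (1 / N)"
    using \<open>N > 0\<close> by (simp add: c_def flip: of_real_mult)
  also have "l2_inner f f = complex_of_real N"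
    using f by (simp add: l2_inner_self is_eigenfunction_def N_def)
  also have "complex_of_real (1 / N) * complex_of_real N = 1"
    using \<open>N > 0\<close> by (simp flip: of_real_mult)
  finally have "l2_inner (\<lambda>z. c * f z) (\<lambda>z. c * f z) = 1" .
  moreover have "is_eigenfunction V E (\<lambda>z. c * f z)"
    using \<open>N > 0\<close> by (intro is_eigenfunction_cmult[OF f]) (simp add: c_def)
  ultimately show ?thesis using that by blast
qed

section \<open>Countably many eigenvalues\<close>

lemma has_sum_norm_sq_orthonormal_combination:
  assumes fin: "finite F" and l2: "\<And>E. E \<in> F \<Longrightarrow> in_l2 (e E)"
    and orth: "\<And>E E'. E \<in> F \<Longrightarrow> E' \<in> F \<Longrightarrow> l2_inner (e E) (e E') = (if E = E' then 1 else 0)"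
  shows "((\<lambda>z. (cmod (\<Sum>E\<in>F. c E * e E z))\<^sup>2) has_sum (\<Sum>E\<in>F. (cmod (c E))\<^sup>2)) UNIV"
proof -
  let ?g = "\<lambda>z. \<Sum>E\<in>F. c E * e E z"
  have expand: "cnj (?g z) * ?g z =
      (\<Sum>E\<in>F. \<Sum>E'\<in>F. (cnj (c E) * c E') * (cnj (e E z) * e E' z))" for z
    unfolding cnj_sum sum_product by (intro sum.cong refl) (simp add: mult_ac)
  have "((\<lambda>z. cnj (?g z) * ?g z) has_sum
      (\<Sum>E\<in>F. \<Sum>E'\<in>F. (cnj (c E) * c E') * l2_inner (e E) (e E'))) UNIV"
    unfolding expand l2_inner_def
    by (intro has_sum_sum fin has_sum_cmult_right has_sum_infsum summable_on_cnj_mult l2)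
  also have "(\<Sum>E\<in>F. \<Sum>E'\<in>F. (cnj (c E) * c E') * l2_inner (e E) (e E')) =
      (\<Sum>E\<in>F. cnj (c E) * c E)"
    using fin by (intro sum.cong refl) (simp add: orth if_distrib cong: if_cong)
  finally have "((\<lambda>z. Re (cnj (?g z) * ?g z)) has_sum Re (\<Sum>E\<in>F. cnj (c E) * c E)) UNIV"
    by (rule has_sum_Re)
  then show ?thesis by (simp only: cnj_mult_self Re_complex_of_real flip: of_real_sum)
qed

lemma bessel_inequality_at_site:
  assumes "finite F" "\<And>E. E \<in> F \<Longrightarrow> in_l2 (e E)"
    and "\<And>E E'. E \<in> F \<Longrightarrow> E' \<in> F \<Longrightarrow> l2_inner (e E) (e E') = (if E = E' then 1 else 0)"
  shows "(\<Sum>E\<in>F. (cmod (e E y))\<^sup>2) \<le> 1"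
proof -
  define s where "s = (\<Sum>E\<in>F. (cmod (e E y))\<^sup>2)"
  txt \<open>Test the orthonormal family against its own values at \<open>y\<close>: the combination
    \<open>\<Sum>E. cnj (e E y) * e E\<close> has norm \<open>s\<close> squared and value \<open>s\<close> at \<open>y\<close>.\<close>
  let ?g = "\<lambda>z. \<Sum>E\<in>F. cnj (e E y) * e E z"
  have "((\<lambda>z. (cmod (?g z))\<^sup>2) has_sum s) UNIV"
    using has_sum_norm_sq_orthonormal_combination[OF assms, of "\<lambda>E. cnj (e E y)"]
    by (simp add: s_def)
  moreover have "?g y = complex_of_real s"
    by (simp add: s_def cnj_mult_self)
  ultimately have "s\<^sup>2 \<le> s"
    using finite_sum_le_has_sum[of "\<lambda>z. (cmod (?g z))\<^sup>2" UNIV s "{y}"] by simp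
  moreover have "s \<ge> 0" unfolding s_def by (simp add: sum_nonneg)
  ultimately show ?thesis
    using mult_le_cancel_left2[of s s] unfolding s_def[symmetric] by (auto simp: power2_eq_square)
qed

lemma countable_orthonormal_nonvanishing_at_site:
  assumes l2: "\<And>E. E \<in> A \<Longrightarrow> in_l2 (e E)"
    and orth: "\<And>E E'. E \<in> A \<Longrightarrow> E' \<in> A \<Longrightarrow> l2_inner (e E) (e E') = (if E = E' then 1 else 0)"
  shows "countable {E \<in> A. e E y \<noteq> 0}"
proof -
  have "finite {E \<in> A. inverse (real (Suc k)) < (cmod (e E y))\<^sup>2}" for k
  proof -
    have "card G \<le> Suc k" if G: "G \<subseteq> {E \<in> A. inverse (real (Suc k)) < (cmod (e E y))\<^sup>2}" "finite G" for G
    proof -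
      have "real (card G) * inverse (real (Suc k)) = (\<Sum>E\<in>G. inverse (real (Suc k)))" by simp
      also have "\<dots> \<le> (\<Sum>E\<in>G. (cmod (e E y))\<^sup>2)"
        using G by (intro sum_mono) auto
      also have "\<dots> \<le> 1"
        using G by (intro bessel_inequality_at_site[where e = e and y = y] l2 orth) auto
      finally show ?thesis by (simp add: field_simps)
    qed
    then show ?thesis using finite_if_finite_subsets_card_bdd by blast
  qed
  moreover have "{E \<in> A. e E y \<noteq> 0} = (\<Union>k. {E \<in> A. inverse (real (Suc k)) < (cmod (e E y))\<^sup>2})"
  proof (intro equalityI subsetI)
    fix E
    assume "E \<in> {E \<in> A. e E y \<noteq> 0}"
    then show "E \<in> (\<Union>k. {E \<in> A. inverse (real (Suc k)) < (cmod (e E y))\<^sup>2})"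
      using reals_Archimedean[of "(cmod (e E y))\<^sup>2"] by auto
  qed auto
  ultimately show ?thesis by (simp add: countable_finite)
qed

lemma countable_eigenvalues: "countable {E. eigenvalue (V :: ('d::finite) site \<Rightarrow> real) E}"
proof -
  define e where "e E = (SOME f. is_eigenfunction V E f \<and> l2_inner f f = 1)" for E
  have e: "is_eigenfunction V E (e E) \<and> l2_inner (e E) (e E) = 1" if E: "eigenvalue V E" for E
  proof -
    obtain f where "is_eigenfunction V E f" "l2_inner f f = 1"
      using normalized_eigenfunction_exists[OF E] .
    then show ?thesis
      unfolding e_def by (intro someI[where P = "\<lambda>f. is_eigenfunction V E f \<and> l2_inner f f = 1"]) simp
  qed
  have orth: "l2_inner (e E) (e E') = (if E = E' then 1 else 0)"
    if "eigenvalue V E" "eigenvalue V E'" for E E'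
    using e[OF that(1)] e[OF that(2)] eigenfunctions_orthogonal[of V E "e E" E' "e E'"] by auto
  have "{E. eigenvalue V E} \<subseteq> (\<Union>y. {E \<in> {E. eigenvalue V E}. e E y \<noteq> 0})"
    using e by (auto simp: is_eigenfunction_def fun_eq_iff)
  moreover have "countable {E \<in> {E. eigenvalue V E}. e E y \<noteq> 0}" for y
    by (rule countable_orthonormal_nonvanishing_at_site[where e = e])
      (use e orth in \<open>auto simp: is_eigenfunction_def\<close>)
  ultimately show ?thesis by (meson countable_UN countableI_type countable_subset)
qed

section \<open>Sites that split an eigenspace\<close>

definition splits_eigenspace :: "(('d::finite) site \<Rightarrow> real) \<Rightarrow> real \<Rightarrow> 'd site \<Rightarrow> bool" where
  "splits_eigenspace W E x \<longleftrightarrow>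
     (\<exists>f g. is_eigenfunction W E f \<and> f x = 0 \<and> is_eigenfunction W E g \<and> g x \<noteq> 0)"

definition splits_eigenspace_at :: "(('d::finite) site \<Rightarrow> real) \<Rightarrow> 'd site \<Rightarrow> bool" where
  "splits_eigenspace_at W x \<longleftrightarrow> (\<exists>E. splits_eigenspace W E x)"

lemma simple_eigenvalue_if_no_split:
  assumes "\<And>x. \<not> splits_eigenspace_at W x" and "eigenvalue W E"
  shows "simple_eigenvalue W E"
  unfolding simple_eigenvalue_def
proof (intro conjI allI impI \<open>eigenvalue W E\<close>)
  fix f g
  assume f: "is_eigenfunction W E f" and g: "is_eigenfunction W E g"
  have fE: "anderson_op W f = (\<lambda>z. complex_of_real E * f z)"
    and gE: "anderson_op W g = (\<lambda>z. complex_of_real E * g z)"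
    using f g by (simp_all add: is_eigenfunction_def)
  obtain x where fx: "f x \<noteq> 0" using f by (auto simp: is_eigenfunction_def)
  define h where "h z = f x * g z - g x * f z" for z
  have "in_l2 h"
    using f g unfolding h_def is_eigenfunction_def by (intro in_l2_diff in_l2_cmult) auto
  have "anderson_op W h = (\<lambda>z. f x * anderson_op W g z - g x * anderson_op W f z)"
    unfolding h_def anderson_op_diff anderson_op_cmult ..
  also have "\<dots> = (\<lambda>z. complex_of_real E * h z)"
    unfolding fE gE h_def by (simp add: algebra_simps)
  finally have hE: "anderson_op W h = (\<lambda>z. complex_of_real E * h z)" .
  have "h x = 0" by (simp add: h_def mult.commute)
  have "h = (\<lambda>_. 0)"
  proof (rule ccontr)
    assume "h \<noteq> (\<lambda>_. 0)"
    with \<open>in_l2 h\<close> hE have "is_eigenfunction W E h" by (simp add: is_eigenfunction_def)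
    with \<open>h x = 0\<close> f fx have "splits_eigenspace_at W x"
      unfolding splits_eigenspace_at_def splits_eigenspace_def by blast
    with assms(1) show False by blast
  qed
  then have "f x * g z - g x * f z = 0" for z
    unfolding h_def[symmetric] by simp
  then have "g z = (g x / f x) * f z" for z
    using fx by (simp add: field_simps)
  then show "\<exists>c. g = (\<lambda>z. c * f z)" by blast
qed

lemma is_eigenfunction_fun_upd_vanishing:
  assumes "f x = 0"
  shows "is_eigenfunction (W(x := v)) E f \<longleftrightarrow> is_eigenfunction W E f"
proof -
  have "anderson_op (W(x := v)) f = anderson_op W f"
  proof
    show "anderson_op (W(x := v)) f z = anderson_op W f z" for z
      using assms by (cases "z = x") (simp_all add: anderson_op_eq)
  qed
  then show ?thesis by (simp add: is_eigenfunction_def)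
qed

lemma countable_splitting_couplings:
  fixes W :: "('d::finite) site \<Rightarrow> real"
  shows "countable {v. splits_eigenspace_at (W(x := v)) x}"
proof -
  let ?B = "{v. splits_eigenspace_at (W(x := v)) x}"
  define energy where "energy v = (SOME E. splits_eigenspace (W(x := v)) E x)" for v
  have energy: "splits_eigenspace (W(x := v)) (energy v) x" if "v \<in> ?B" for v
    using that unfolding energy_def splits_eigenspace_at_def mem_Collect_eq by (rule someI_ex)
  have "energy ` ?B \<subseteq> {E. eigenvalue W E}"
  proof
    fix E
    assume "E \<in> energy ` ?B"
    then obtain v where v: "v \<in> ?B" and "E = energy v" by blast
    then obtain f where "is_eigenfunction (W(x := v)) E f" "f x = 0"
      using energy[OF v] unfolding splits_eigenspace_def by blast
    then have "is_eigenfunction W E f"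
      using is_eigenfunction_fun_upd_vanishing by blast
    then show "E \<in> {E. eigenvalue W E}" by (auto simp: eigenvalue_def)
  qed
  then have "countable (energy ` ?B)"
    using countable_eigenvalues countable_subset by blast
  moreover have "inj_on energy ?B"
  proof (rule inj_onI)
    fix v1 v2
    assume v1: "v1 \<in> ?B" and v2: "v2 \<in> ?B" and eq: "energy v1 = energy v2"
    obtain g1 where g1: "is_eigenfunction (W(x := v1)) (energy v1) g1" "g1 x \<noteq> 0"
      using energy[OF v1] unfolding splits_eigenspace_def by blast
    obtain g2 where g2: "is_eigenfunction (W(x := v2)) (energy v1) g2" "g2 x \<noteq> 0"
      using energy[OF v2] unfolding splits_eigenspace_def eq by blast
    have "complex_of_real ((W(x := v2)) x - (W(x := v1)) x) * (cnj (g1 x) * g2 x) = 0"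
      by (rule eigenfunctions_rank_one_perturbation[OF g1(1) g2(1)]) simp
    then show "v1 = v2" using g1(2) g2(2) by simp
  qed
  ultimately show ?thesis by (rule countable_image_inj_on)
qed


section \<open>Measurability of the splitting event\<close>

lemma closed_Collect_ex_compact:
  fixes T :: "('a::topological_space \<times> 'b::topological_space) set"
  assumes "compact K" "closed T"
  shows "closed {a. \<exists>b\<in>K. (a, b) \<in> T}"
proof -
  let ?X = "prod_topology euclidean (subtopology euclidean K) :: ('a \<times> 'b) topology"
  have "compact_space (subtopology euclidean K)"
    using assms(1) by (intro compact_space_subtopology) (simp add: compactin_subtopology)
  then have "closed_map ?X euclidean fst"
    by (rule closed_map_fst)
  moreover have "closedin ?X (T \<inter> UNIV \<times> K)"
  proof -
    have "?X = subtopology euclidean (UNIV \<times> K)"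
      using subtopology_Times[of euclidean euclidean UNIV K] by (simp add: eq_commute)
    then show ?thesis using assms(2) by (metis closedin_closed_Int inf_commute)
  qed
  ultimately have "closed (fst ` (T \<inter> UNIV \<times> K))"
    unfolding closed_map_def by simp
  moreover have "fst ` (T \<inter> UNIV \<times> K) = {a. \<exists>b\<in>K. (a, b) \<in> T}" by force
  ultimately show ?thesis by simp
qed

lemma compact_funcset_UNIV:
  fixes S :: "'b::topological_space set"
  assumes "compact S"
  shows "compact (UNIV \<rightarrow> S :: ('a \<Rightarrow> 'b) set)"
proof -
  have "compactin (product_topology (\<lambda>_. euclidean) UNIV) (Pi\<^sub>E (UNIV :: 'a set) (\<lambda>_. S))"
    using assms by (subst compactin_PiE) auto
  then show ?thesis unfolding euclidean_product_topology by (simp add: PiE_UNIV_domain)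
qed

lemma compact_l2_bounded: "compact (l2_bounded r :: ('i \<Rightarrow> complex) set)"
proof -
  have "closed {f :: 'i \<Rightarrow> complex. (\<Sum>z\<in>F. (cmod (f z))\<^sup>2) \<le> r}" for F
    by (intro closed_Collect_le continuous_on_sum continuous_on_power continuous_on_norm
        continuous_on_product_coordinates continuous_on_const)
  moreover have "l2_bounded r = (\<Inter>F\<in>{F. finite F}. {f :: 'i \<Rightarrow> complex. (\<Sum>z\<in>F. (cmod (f z))\<^sup>2) \<le> r})"
    by (auto simp: l2_bounded_def)
  ultimately have "closed (l2_bounded r :: ('i \<Rightarrow> complex) set)" by auto
  moreover have "(l2_bounded r :: ('i \<Rightarrow> complex) set) \<subseteq> UNIV \<rightarrow> cball 0 (sqrt r)"
  proof
    fix f :: "'i \<Rightarrow> complex"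
    assume "f \<in> l2_bounded r"
    then have "(\<Sum>z'\<in>{z}. (cmod (f z'))\<^sup>2) \<le> r" for z
      unfolding l2_bounded_def by blast
    then have "(cmod (f z))\<^sup>2 \<le> r" for z by simp
    then show "f \<in> UNIV \<rightarrow> cball 0 (sqrt r)" by (simp add: real_le_rsqrt)
  qed
  ultimately show ?thesis
    using compact_Int_closed[OF compact_funcset_UNIV[OF compact_cball]] by (metis inf.absorb2)
qed

type_synonym 'd split_witness = "('d site \<Rightarrow> real) \<times> real \<times> ('d site \<Rightarrow> complex) \<times> ('d site \<Rightarrow> complex)"

text \<open>Witnesses \<open>(W, E, f, g)\<close> of a split at \<open>x\<close>, normalized by \<open>f y = 1\<close> and \<open>g x = 1\<close>; square
  summability is imposed separately through the compact sets \<^const>\<open>l2_bounded\<close>, which is what makes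
  the projection to \<open>W\<close> closed.\<close>
definition split_witnesses :: "('d::finite) site \<Rightarrow> 'd site \<Rightarrow> 'd split_witness set" where
  "split_witnesses x y = {(W, E, f, g).
     anderson_op W f = (\<lambda>z. complex_of_real E * f z) \<and>
     anderson_op W g = (\<lambda>z. complex_of_real E * g z) \<and> f y = 1 \<and> f x = 0 \<and> g x = 1}"

lemma continuous_on_anderson_op [continuous_intros]:
  assumes W: "continuous_on S W" and f: "continuous_on S f"
  shows "continuous_on S (\<lambda>s. anderson_op (W s) (f s))"
proof -
  have "continuous_on S (\<lambda>s. W s z)" "continuous_on S (\<lambda>s. f s z)" for z
    using W f by (simp_all add: continuous_on_product_then_coordinatewise)
  then show ?thesis
    unfolding anderson_op_def by (intro continuous_intros)
qed

lemma closed_split_witnesses: "closed (split_witnesses x y)"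
proof -
  let ?W = "\<lambda>p :: 'd split_witness. fst p"
  let ?E = "\<lambda>p :: 'd split_witness. fst (snd p)"
  let ?f = "\<lambda>p :: 'd split_witness. fst (snd (snd p))"
  let ?g = "\<lambda>p :: 'd split_witness. snd (snd (snd p))"
  have cont: "continuous_on UNIV ?W" "continuous_on UNIV ?E" "continuous_on UNIV ?f" "continuous_on UNIV ?g"
    by (intro continuous_intros)+
  have "continuous_on UNIV (\<lambda>p. ?f p z)" "continuous_on UNIV (\<lambda>p. ?g p z)" for z :: "'d site"
    by (rule continuous_on_product_then_coordinatewise[OF cont(3)],
        rule continuous_on_product_then_coordinatewise[OF cont(4)])
  moreover have "split_witnesses x y = {p.
      anderson_op (?W p) (?f p) = (\<lambda>z. complex_of_real (?E p) * ?f p z) \<and>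
      anderson_op (?W p) (?g p) = (\<lambda>z. complex_of_real (?E p) * ?g p z) \<and>
      ?f p y = 1 \<and> ?f p x = 0 \<and> ?g p x = 1}"
    by (auto simp: split_witnesses_def)
  ultimately show ?thesis
    using cont by (simp only:) (intro closed_Collect_conj closed_Collect_eq continuous_intros)
qed

lemma splits_eigenspace_at_iff_witness:
  "splits_eigenspace_at W x \<longleftrightarrow> (\<exists>n::nat. \<exists>y.
     \<exists>b \<in> cball 0 (real n) \<times> l2_bounded (real n) \<times> l2_bounded (real n). (W, b) \<in> split_witnesses x y)"
proof
  assume "\<exists>n::nat. \<exists>y. \<exists>b \<in> cball 0 (real n) \<times> l2_bounded (real n) \<times> l2_bounded (real n).
            (W, b) \<in> split_witnesses x y"
  then obtain n :: nat and y E f g where l2: "f \<in> l2_bounded (real n)" "g \<in> l2_bounded (real n)"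
    and eq: "anderson_op W f = (\<lambda>z. complex_of_real E * f z)"
      "anderson_op W g = (\<lambda>z. complex_of_real E * g z)"
    and vals: "f y = 1" "f x = 0" "g x = 1"
    by (auto simp: split_witnesses_def)
  have "f \<noteq> (\<lambda>_. 0)" "g \<noteq> (\<lambda>_. 0)" using vals by (metis zero_neq_one)+
  with l2 eq have "is_eigenfunction W E f" "is_eigenfunction W E g"
    by (auto simp: is_eigenfunction_def in_l2_iff_l2_bounded)
  with vals show "splits_eigenspace_at W x"
    unfolding splits_eigenspace_at_def splits_eigenspace_def by (metis zero_neq_one)
next
  assume "splits_eigenspace_at W x"
  then obtain E f g where f: "is_eigenfunction W E f" "f x = 0"
    and g: "is_eigenfunction W E g" "g x \<noteq> 0"
    unfolding splits_eigenspace_at_def splits_eigenspace_def by blast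
  obtain y where "f y \<noteq> 0" using f by (auto simp: is_eigenfunction_def)
  define f' where "f' = (\<lambda>z. inverse (f y) * f z)"
  define g' where "g' = (\<lambda>z. inverse (g x) * g z)"
  have f': "is_eigenfunction W E f'" and g': "is_eigenfunction W E g'"
    unfolding f'_def g'_def using f g \<open>f y \<noteq> 0\<close> by (auto intro: is_eigenfunction_cmult)
  then obtain r s where "f' \<in> l2_bounded r" "g' \<in> l2_bounded s"
    by (auto simp: is_eigenfunction_def in_l2_iff_l2_bounded)
  moreover obtain n :: nat where "max \<bar>E\<bar> (max r s) \<le> real n"
    using real_arch_simple by blast
  ultimately have "(E, f', g') \<in> cball 0 (real n) \<times> l2_bounded (real n) \<times> l2_bounded (real n)"
    using l2_bounded_mono[of r "real n"] l2_bounded_mono[of s "real n"] by auto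
  moreover have "(W, E, f', g') \<in> split_witnesses x y"
    using f' g' f(2) g(2) \<open>f y \<noteq> 0\<close>
    by (simp add: split_witnesses_def is_eigenfunction_def f'_def g'_def)
  ultimately show "\<exists>n::nat. \<exists>y. \<exists>b \<in> cball 0 (real n) \<times> l2_bounded (real n) \<times> l2_bounded (real n).
      (W, b) \<in> split_witnesses x y"
    by blast
qed

lemma borel_splits_eigenspace_at:
  fixes x :: "('d::finite) site"
  shows "{W. splits_eigenspace_at W x} \<in> sets borel"
proof -
  have "{W. splits_eigenspace_at W x} = (\<Union>n::nat. \<Union>y.
      {W. \<exists>b \<in> cball 0 (real n) \<times> l2_bounded (real n) \<times> l2_bounded (real n). (W, b) \<in> split_witnesses x y})"
    by (simp add: splits_eigenspace_at_iff_witness set_eq_iff)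
  also have "\<dots> \<in> sets borel"
    by (intro sets.countable_UN'' countableI_type borel_closed closed_Collect_ex_compact compact_Times
        compact_cball compact_l2_bounded closed_split_witnesses)
  finally show ?thesis .
qed

section \<open>Averaging over the coupling at one site\<close>

lemma (in prob_space) AE_notin_null_sections:
  assumes indep: "indep_var N Y N' X" and A: "A \<in> sets (N \<Otimes>\<^sub>M N')"
    and null: "\<And>y. Pair y -` A \<in> null_sets (distr M N' X)"
  shows "AE \<omega> in M. (Y \<omega>, X \<omega>) \<notin> A"
proof -
  have Y: "random_variable N Y" and X: "random_variable N' X"
    and prod: "distr M N Y \<Otimes>\<^sub>M distr M N' X = distr M (N \<Otimes>\<^sub>M N') (\<lambda>\<omega>. (Y \<omega>, X \<omega>))"
    using indep by (auto simp: indep_var_distribution_eq)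
  interpret PX: prob_space "distr M N' X" using X by (rule prob_space_distr)
  have YX: "(\<lambda>\<omega>. (Y \<omega>, X \<omega>)) \<in> measurable M (N \<Otimes>\<^sub>M N')"
    using Y X by (rule measurable_Pair)
  have "emeasure M ((\<lambda>\<omega>. (Y \<omega>, X \<omega>)) -` A \<inter> space M) =
      emeasure (distr M N Y \<Otimes>\<^sub>M distr M N' X) A"
    unfolding prod by (rule emeasure_distr[OF YX A, symmetric])
  also have "\<dots> = (\<integral>\<^sup>+y. emeasure (distr M N' X) (Pair y -` A) \<partial>distr M N Y)"
    by (rule PX.emeasure_pair_measure_alt) (use A in simp)
  also have "\<dots> = 0" using null by (simp add: null_setsD1)
  finally have "(\<lambda>\<omega>. (Y \<omega>, X \<omega>)) -` A \<inter> space M \<in> null_sets M"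
    using measurable_sets[OF YX A] by auto
  then show ?thesis by (rule AE_I') auto
qed

lemma (in prob_space) emeasure_vimage_countable_distributed:
  assumes "distributed M lborel Z f" "countable C"
  shows "emeasure M (Z -` C \<inter> space M) = 0"
proof -
  have null: "C \<in> null_sets lborel" using assms(2) by (rule countable_imp_null_set_lborel)
  then have "C \<in> null_sets (density lborel f)"
    using assms(1) AE_not_in[OF null]
    by (auto simp: null_sets_density_iff distributed_def elim: eventually_mono)
  then have "emeasure (distr M lborel Z) C = 0"
    using assms(1) by (simp add: distributed_def null_setsD1)
  moreover have "emeasure (distr M lborel Z) C = emeasure M (Z -` C \<inter> space M)"
    using assms(1) null by (intro emeasure_distr) (auto simp: distributed_def)
  ultimately show ?thesis by simp
qed

text \<open>Both variables of an \<^const>\<open>prob_space.indep_var\<close> must have the same type, so the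
  coupling at \<open>x\<close> is encoded as the constant function \<open>\<lambda>_. V \<omega> x\<close>.\<close>
lemma (in prob_space) indep_var_fun_upd_coordinate:
  fixes V :: "'a \<Rightarrow> 'i::countable \<Rightarrow> real"
  assumes "indep_vars (\<lambda>_. borel) (\<lambda>i \<omega>. V \<omega> i) UNIV"
  shows "indep_var borel (\<lambda>\<omega>. (V \<omega>)(x := 0)) borel (\<lambda>\<omega>. \<lambda>_. V \<omega> x)"
proof -
  let ?rest = "\<lambda>r :: 'i \<Rightarrow> real. \<lambda>i. if i = x then 0 else r i"
  let ?const = "\<lambda>r :: 'i \<Rightarrow> real. \<lambda>_ :: 'i. r x"
  have "indep_var (Pi\<^sub>M (UNIV - {x}) (\<lambda>_. borel)) (\<lambda>\<omega>. restrict (\<lambda>i. V \<omega> i) (UNIV - {x}))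
                  (Pi\<^sub>M {x} (\<lambda>_. borel)) (\<lambda>\<omega>. restrict (\<lambda>i. V \<omega> i) {x})"
    by (rule indep_var_restrict[OF assms]) auto
  moreover have "?rest \<in> measurable (Pi\<^sub>M (UNIV - {x}) (\<lambda>_. borel)) borel"
  proof (rule measurable_coordinatewise_then_product)
    fix i
    show "(\<lambda>r. ?rest r i) \<in> borel_measurable (Pi\<^sub>M (UNIV - {x}) (\<lambda>_. borel))"
      by (cases "i = x") (simp_all add: measurable_component_singleton)
  qed
  moreover have "?const \<in> measurable (Pi\<^sub>M {x} (\<lambda>_. borel)) borel"
    by (rule measurable_coordinatewise_then_product) (simp add: measurable_component_singleton)
  ultimately have "indep_var borel (?rest \<circ> (\<lambda>\<omega>. restrict (\<lambda>i. V \<omega> i) (UNIV - {x})))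
                            borel (?const \<circ> (\<lambda>\<omega>. restrict (\<lambda>i. V \<omega> i) {x}))"
    by (rule indep_var_compose)
  moreover have "?rest \<circ> (\<lambda>\<omega>. restrict (\<lambda>i. V \<omega> i) (UNIV - {x})) = (\<lambda>\<omega>. (V \<omega>)(x := 0))"
    by (auto simp: fun_eq_iff)
  moreover have "?const \<circ> (\<lambda>\<omega>. restrict (\<lambda>i. V \<omega> i) {x}) = (\<lambda>\<omega>. \<lambda>_. V \<omega> x)"
    by (auto simp: fun_eq_iff)
  ultimately show ?thesis by simp
qed

lemma borel_measurable_fun_upd_pair:
  fixes x :: "'i::countable"
  shows "(\<lambda>p. (fst p)(x := snd p x)) \<in> measurable (borel \<Otimes>\<^sub>M borel) (borel :: ('i \<Rightarrow> real) measure)"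
proof (rule measurable_coordinatewise_then_product)
  fix i
  have coord: "(\<lambda>W :: 'i \<Rightarrow> real. W j) \<in> borel_measurable borel" for j
    by (rule borel_measurable_continuous_onI) simp
  show "(\<lambda>p. ((fst p)(x := snd p x)) i :: real) \<in> borel_measurable (borel \<Otimes>\<^sub>M borel)"
    using measurable_compose[OF measurable_fst coord] measurable_compose[OF measurable_snd coord]
    by (cases "i = x") simp_all
qed

lemma AE_not_splits_eigenspace_at:
  fixes V :: "'a \<Rightarrow> ('d::finite) site \<Rightarrow> real"
  assumes "anderson_model M V \<rho>"
  shows "AE \<omega> in M. \<not> splits_eigenspace_at (V \<omega>) x"
proof -
  interpret prob_space M using assms by (simp add: anderson_model_def)
  let ?A = "{(W, r). splits_eigenspace_at (W(x := r x)) x} :: (('d site \<Rightarrow> real) \<times> ('d site \<Rightarrow> real)) set"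
  let ?X = "\<lambda>\<omega>. \<lambda>_ :: 'd site. V \<omega> x"
  have dist: "distributed M lborel (\<lambda>\<omega>. V \<omega> x) (\<lambda>t. ennreal (\<rho> t))"
    using assms by (simp add: anderson_model_def)
  have "?A = (\<lambda>p. (fst p)(x := snd p x)) -` {W. splits_eigenspace_at W x} \<inter> space (borel \<Otimes>\<^sub>M borel)"
    by (auto simp: space_pair_measure)
  then have A: "?A \<in> sets (borel \<Otimes>\<^sub>M borel)"
    using measurable_sets[OF borel_measurable_fun_upd_pair borel_splits_eigenspace_at] by simp
  have "AE \<omega> in M. ((V \<omega>)(x := 0), ?X \<omega>) \<notin> ?A"
  proof (rule AE_notin_null_sections[OF _ A])
    show "indep_var borel (\<lambda>\<omega>. (V \<omega>)(x := 0)) borel ?X"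
      using assms by (intro indep_var_fun_upd_coordinate) (simp add: anderson_model_def)
    fix W
    have S: "Pair W -` ?A \<in> sets borel" using A by (rule sets_Pair1)
    have X: "?X \<in> measurable M borel"
      using dist by (intro measurable_coordinatewise_then_product) (simp add: distributed_def)
    have "emeasure (distr M borel ?X) (Pair W -` ?A) = emeasure M (?X -` Pair W -` ?A \<inter> space M)"
      by (rule emeasure_distr[OF X S])
    also have "?X -` Pair W -` ?A \<inter> space M =
        (\<lambda>\<omega>. V \<omega> x) -` {v. splits_eigenspace_at (W(x := v)) x} \<inter> space M"
      by auto
    also have "emeasure M \<dots> = 0"
      by (rule emeasure_vimage_countable_distributed[OF dist countable_splitting_couplings])
    finally have "emeasure (distr M borel ?X) (Pair W -` ?A) = 0" .
    with S show "Pair W -` ?A \<in> null_sets (distr M borel ?X)" by auto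
  qed
  then show ?thesis by (rule eventually_mono) simp
qed

theorem mainTheorem2:
  fixes M :: "'a measure" and V :: "'a \<Rightarrow> ('d::finite) site \<Rightarrow> real"
    and \<rho> :: "real \<Rightarrow> real" and I :: "real set"
  assumes "anderson_model M V \<rho>"
    and "exp_localization_interval M V I"
  shows "AE \<omega> in M. \<forall>E\<in>I. eigenvalue (V \<omega>) E \<longrightarrow> simple_eigenvalue (V \<omega>) E"
proof -
  have "AE \<omega> in M. \<forall>x. \<not> splits_eigenspace_at (V \<omega>) x"
    using AE_not_splits_eigenspace_at[OF assms(1)] by (simp add: AE_all_countable)
  then show ?thesis
    by (rule eventually_mono) (auto intro: simple_eigenvalue_if_no_split)
qed

end
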